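(* Let $\partial_1,\partial_2$ be nonzero homogeneous locally nilpotent derivations of fiber type on $A$. Then $\partial_1+\partial_2$ is locally nilpotent if and only if $[\partial_1,\partial_2]$ is locally nilpotent.
   Context: Let $\mathbf k$ be an algebraically closed field of characteristic zero, $\mathbb T\cong(\mathbf k^\times)^n$ an algebraic torus with character lattice $M$. Let $X$ be a normal affine variety with an effective $\mathbb T$-action, $A=\mathbf k[X]$ with the induced $M$-grading $A=\bigoplus_{m\in M}A_m\chi^m$, $A_m\subseteq\mathbf k(X)^{\mathbb T}$, $K=\operatorname{Frac}A$. A derivation $\partial$ of $A$ is homogeneous of degree $e\in M$ if $\partial(A_m\chi^m)\subseteq A_{m+e}\chi^{m+e}$ for all $m$; it is locally nilpotent if every element of $A$ is killed by some power of $\partial$; a homogeneous locally nilpotent derivation is of fiber type if its unique extension to $K$ annihilates $\mathbf k(X)^{\mathbb T}$. *)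

theory Defs
  imports "HOL-Analysis.Finite_Cartesian_Product" "HOL-Computational_Algebra.Polynomial"
begin

text \<open>Setting: everything lives inside an ambient field 'a of characteristic zero.
  k is a subfield (the base field), A a subring (the coordinate ring), graded by the
  lattice M = int^'n via the family of homogeneous pieces G m (= A_m chi^m).\<close>

definition subfield :: "'a::field set \<Rightarrow> bool" where
  "subfield k \<longleftrightarrow> 0 \<in> k \<and> 1 \<in> k \<and> (\<forall>x\<in>k. \<forall>y\<in>k. x + y \<in> k \<and> x * y \<in> k)
     \<and> (\<forall>x\<in>k. - x \<in> k \<and> inverse x \<in> k)"

definition alg_closed_in :: "'a::field set \<Rightarrow> bool" where
  "alg_closed_in k \<longleftrightarrow> (\<forall>p::'a poly. (\<forall>i. coeff p i \<in> k) \<and> degree p \<ge> 1 \<longrightarrow> (\<exists>x\<in>k. poly p x = 0))"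

inductive_set alg_gen :: "'a::field set \<Rightarrow> 'a set \<Rightarrow> 'a set" for k S where
  base_k: "c \<in> k \<Longrightarrow> c \<in> alg_gen k S"
| base_S: "s \<in> S \<Longrightarrow> s \<in> alg_gen k S"
| add: "x \<in> alg_gen k S \<Longrightarrow> y \<in> alg_gen k S \<Longrightarrow> x + y \<in> alg_gen k S"
| mult: "x \<in> alg_gen k S \<Longrightarrow> y \<in> alg_gen k S \<Longrightarrow> x * y \<in> alg_gen k S"

definition frac_field :: "'a::field set \<Rightarrow> 'a set" where
  "frac_field A = {a / b | a b. a \<in> A \<and> b \<in> A \<and> b \<noteq> 0}"

definition integral_over :: "'a::field set \<Rightarrow> 'a \<Rightarrow> bool" where
  "integral_over A x \<longleftrightarrow> (\<exists>p::'a poly. lead_coeff p = 1 \<and> (\<forall>i. coeff p i \<in> A) \<and> poly p x = 0)"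

inductive_set group_gen :: "'m::ab_group_add set \<Rightarrow> 'm set" for S where
  zero: "0 \<in> group_gen S"
| base: "s \<in> S \<Longrightarrow> s \<in> group_gen S"
| add: "x \<in> group_gen S \<Longrightarrow> y \<in> group_gen S \<Longrightarrow> x + y \<in> group_gen S"
| neg: "x \<in> group_gen S \<Longrightarrow> - x \<in> group_gen S"

text \<open>A = k[X] for a normal affine variety X over the algebraically closed field k of
  characteristic zero, with an effective action of the torus with character lattice
  M = int^'n, i.e. an M-grading A = (+)_m G m whose weights generate M.\<close>
definition normal_affine_torus_algebra ::
  "'a::field_char_0 set \<Rightarrow> 'a set \<Rightarrow> (int^'n::finite \<Rightarrow> 'a set) \<Rightarrow> bool" where
  "normal_affine_torus_algebra k A G \<longleftrightarrow>
     subfield k \<and> alg_closed_in k \<and>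
     (\<exists>S. finite S \<and> S \<subseteq> A \<and> A = alg_gen k S) \<and>
     (\<forall>x\<in>frac_field A. integral_over A x \<longrightarrow> x \<in> A) \<and>
     (\<forall>m. G m \<subseteq> A \<and> 0 \<in> G m \<and> (\<forall>x\<in>G m. \<forall>y\<in>G m. x + y \<in> G m)
          \<and> (\<forall>c\<in>k. \<forall>x\<in>G m. c * x \<in> G m)) \<and>
     k \<subseteq> G 0 \<and>
     (\<forall>m m'. \<forall>x\<in>G m. \<forall>y\<in>G m'. x * y \<in> G (m + m')) \<and>
     (\<forall>a\<in>A. \<exists>D f. finite D \<and> (\<forall>m\<in>D. f m \<in> G m) \<and> a = (\<Sum>m\<in>D. f m)) \<and>
     (\<forall>D f. finite D \<and> (\<forall>m\<in>D. f m \<in> G m) \<and> (\<Sum>m\<in>D. f m) = 0 \<longrightarrow> (\<forall>m\<in>D. f m = 0)) \<and>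
     group_gen {m. G m \<noteq> {0}} = UNIV"

definition is_derivation :: "'a::field set \<Rightarrow> 'a set \<Rightarrow> ('a \<Rightarrow> 'a) \<Rightarrow> bool" where
  "is_derivation k A d \<longleftrightarrow>
     (\<forall>a\<in>A. d a \<in> A) \<and>
     (\<forall>a\<in>A. \<forall>b\<in>A. d (a + b) = d a + d b \<and> d (a * b) = a * d b + b * d a) \<and>
     (\<forall>c\<in>k. \<forall>a\<in>A. d (c * a) = c * d a)"

definition homogeneous_of_degree ::
  "(int^'n::finite \<Rightarrow> 'a set) \<Rightarrow> ('a \<Rightarrow> 'a) \<Rightarrow> int^'n \<Rightarrow> bool" where
  "homogeneous_of_degree G d e \<longleftrightarrow> (\<forall>m. \<forall>x\<in>G m. d x \<in> G (m + e))"

definition locally_nilpotent :: "'a::field set \<Rightarrow> ('a \<Rightarrow> 'a) \<Rightarrow> bool" where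
  "locally_nilpotent A d \<longleftrightarrow> (\<forall>a\<in>A. \<exists>n. (d ^^ n) a = 0)"

text \<open>Unique extension of d to Frac A: d(a/b) = (d a * b - a * d b) / b^2.\<close>
definition frac_ext :: "('a::field \<Rightarrow> 'a) \<Rightarrow> 'a \<Rightarrow> 'a \<Rightarrow> 'a" where
  "frac_ext d a b = (d a * b - a * d b) / b ^ 2"

text \<open>Fiber type: the extension of d to K kills k(X)^T, whose elements are the
  quotients a/b of homogeneous elements of the same degree.\<close>
definition fiber_type :: "(int^'n::finite \<Rightarrow> 'a::field set) \<Rightarrow> ('a \<Rightarrow> 'a) \<Rightarrow> bool" where
  "fiber_type G d \<longleftrightarrow> (\<forall>m. \<forall>a\<in>G m. \<forall>b\<in>G m. b \<noteq> 0 \<longrightarrow> frac_ext d a b = 0)"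

definition homogeneous_LND_fiber_type ::
  "'a::field set \<Rightarrow> 'a set \<Rightarrow> (int^'n::finite \<Rightarrow> 'a set) \<Rightarrow> ('a \<Rightarrow> 'a) \<Rightarrow> bool" where
  "homogeneous_LND_fiber_type k A G d \<longleftrightarrow>
     is_derivation k A d \<and> (\<exists>e. homogeneous_of_degree G d e) \<and>
     locally_nilpotent A d \<and> fiber_type G d"

end

theory Submission
  imports Defs
begin

(* A nonzero fiber-type LND d of degree e acts diagonally: there are a nonzero c (itself
   of degree e) and an additive form psi : M -> Z with psi e = -1 and psi >= 0 on the weight
   monoid S = {m. A_m ~= 0} such that d x = psi(m) * c * x for x in A_m.  For two such
   derivations everything is decided by the integers psi1(e2) and psi2(e1):
   - if one of them is negative, psi1 = psi2; if one is zero and the other nonnegative, a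
     positive combination of psi1 and psi2 is still -1 on e1 and e2.  In both cases a form
     that is >= 0 on S drops along d1, d2 and [d1,d2], so d1 + d2 and [d1,d2] are both LND;
   - if both are >= 1, neither is LND: [d1,d2] multiplies a suitable homogeneous element by
     never vanishing scalars, and the homogeneous components of (d1 + d2)^n x have pairwise
     distinct degrees and nonnegative integer coefficients, one of which stays positive. *)

definition weights :: "('m \<Rightarrow> 'a::zero set) \<Rightarrow> 'm set" where
  "weights G = {m. G m \<noteq> {0}}"

definition additive_endo :: "'a::plus set \<Rightarrow> ('a \<Rightarrow> 'a) \<Rightarrow> bool" where
  "additive_endo A T \<longleftrightarrow> (\<forall>x\<in>A. T x \<in> A) \<and> (\<forall>x\<in>A. \<forall>y\<in>A. T (x + y) = T x + T y)"

definition iter_shift :: "'b::plus \<Rightarrow> nat \<Rightarrow> 'b \<Rightarrow> 'b" where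
  "iter_shift e j m = ((\<lambda>v. v + e) ^^ j) m"

lemma iter_shift_0 [simp]: "iter_shift e 0 m = m"
  by (simp add: iter_shift_def)

lemma iter_shift_Suc [simp]: "iter_shift e (Suc j) m = iter_shift e j m + e"
  by (simp add: iter_shift_def)

lemma iter_shift_add: "iter_shift e j (v + w) = iter_shift e j v + (w::'b::ab_semigroup_add)"
  by (induction j) (simp_all add: ac_simps)

lemma additive_iter_shift:
  assumes "\<And>u v. f (u + v) = f u + (f v :: 'c::comm_ring_1)"
  shows "f (iter_shift e j m) = f m + of_nat j * f e"
  by (induction j) (simp_all add: assms algebra_simps)

lemma additive_diff:
  fixes f :: "'b::ab_group_add \<Rightarrow> 'c::ab_group_add"
  assumes "\<And>u v. f (u + v) = f u + f v"
  shows "f (p - q) = f p - f q"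
  using assms[of "p - q" q] by (simp add: algebra_simps)

(* A function that is additive on a submonoid S with S - S = M extends to an additive function
   on M; this turns the eigenvalues of a derivation on the weights into a form on M. *)
lemma extend_additive:
  fixes S :: "'m::ab_group_add set" and \<phi> :: "'m \<Rightarrow> 'b::ab_group_add"
  assumes closed: "\<And>p q. p \<in> S \<Longrightarrow> q \<in> S \<Longrightarrow> p + q \<in> S"
    and diffs: "\<And>v. \<exists>p q. p \<in> S \<and> q \<in> S \<and> v = p - q"
    and add: "\<And>p q. p \<in> S \<Longrightarrow> q \<in> S \<Longrightarrow> \<phi> (p + q) = \<phi> p + \<phi> q"
  obtains \<Phi> where "\<And>u v. \<Phi> (u + v) = \<Phi> u + \<Phi> v" and "\<And>m. m \<in> S \<Longrightarrow> \<Phi> m = \<phi> m"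
proof -
  define pick where "pick v = (SOME pq. fst pq \<in> S \<and> snd pq \<in> S \<and> v = fst pq - snd pq)" for v
  have pick: "fst (pick v) \<in> S" "snd (pick v) \<in> S" "v = fst (pick v) - snd (pick v)" for v
    using someI_ex[of "\<lambda>pq. fst pq \<in> S \<and> snd pq \<in> S \<and> v = fst pq - snd pq"] diffs[of v]
    unfolding pick_def by auto
  define \<Phi> where "\<Phi> v = \<phi> (fst (pick v)) - \<phi> (snd (pick v))" for v
  have well_defined: "\<Phi> v = \<phi> p - \<phi> q" if "p \<in> S" "q \<in> S" "v = p - q" for v p q
  proof -
    have "p - q = fst (pick v) - snd (pick v)" using pick(3)[of v] that(3) by metis
    then have "p + snd (pick v) = fst (pick v) + q" by (simp add: algebra_simps eq_diff_eq diff_eq_eq)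
    then have "\<phi> p + \<phi> (snd (pick v)) = \<phi> (fst (pick v)) + \<phi> q"
      using add pick that by metis
    then show ?thesis unfolding \<Phi>_def by (simp add: algebra_simps)
  qed
  show thesis
  proof
    fix u v
    obtain p q p' q' where pq: "p \<in> S" "q \<in> S" "u = p - q" "p' \<in> S" "q' \<in> S" "v = p' - q'"
      using diffs by meson
    have "u + v = (p + p') - (q + q')" by (simp only: pq(3,6) add_diff_add)
    then have "\<Phi> (u + v) = \<phi> (p + p') - \<phi> (q + q')" using well_defined closed pq by blast
    also have "\<dots> = (\<phi> p - \<phi> q) + (\<phi> p' - \<phi> q')" using add pq by simp
    also have "\<dots> = \<Phi> u + \<Phi> v" using well_defined[OF pq(1-3)] well_defined[OF pq(4-6)] by simp
    finally show "\<Phi> (u + v) = \<Phi> u + \<Phi> v" .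
  next
    fix m assume m: "m \<in> S"
    obtain p q where pq: "p \<in> S" "q \<in> S" "m = p - q" using diffs by blast
    then have "\<phi> m + \<phi> q = \<phi> p" using add[OF m pq(2)] by simp
    then show "\<Phi> m = \<phi> m" using well_defined[OF pq] by (metis add_right_cancel eq_diff_eq)
  qed
qed

lemma integer_coordinate:
  fixes \<Phi> :: "'m::ab_group_add \<Rightarrow> 'a::field_char_0"
  assumes c: "c \<noteq> 0" and add: "\<And>u v. \<Phi> (u + v) = \<Phi> u + \<Phi> v"
    and int: "\<And>v. \<exists>z::int. \<Phi> v = of_int z * c"
  obtains \<psi> where "\<And>u v. \<psi> (u + v) = \<psi> u + \<psi> v" and "\<And>v. \<Phi> v = of_int (\<psi> v) * c"
proof -
  define \<psi> where "\<psi> v = (SOME z::int. \<Phi> v = of_int z * c)" for v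
  have \<psi>: "\<Phi> v = of_int (\<psi> v) * c" for v
    unfolding \<psi>_def using someI_ex[OF int] by blast
  have add_\<psi>: "\<psi> (u + v) = \<psi> u + \<psi> v" for u v
  proof -
    have "of_int (\<psi> (u + v)) * c = of_int (\<psi> u + \<psi> v) * c"
      using \<psi>[of "u + v"] \<psi>[of u] \<psi>[of v] add[of u v] by (simp add: distrib_right)
    then show ?thesis using c mult_cancel_right of_int_eq_iff by metis
  qed
  show thesis by (rule that[OF add_\<psi> \<psi>])
qed

locale graded_algebra =
  fixes k A :: "'a::field_char_0 set" and G :: "int^'n::finite \<Rightarrow> 'a set"
  assumes normal: "normal_affine_torus_algebra k A G"
begin

abbreviation "S \<equiv> weights G"

lemmas grading = normal[unfolded normal_affine_torus_algebra_def]

lemma G_in_A: "x \<in> G m \<Longrightarrow> x \<in> A"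
  using grading by (elim conjE) blast

lemma G_zero [simp]: "0 \<in> G m"
  using grading by (elim conjE) blast

lemma G_add: "x \<in> G m \<Longrightarrow> y \<in> G m \<Longrightarrow> x + y \<in> G m"
  using grading by (elim conjE) blast

lemma G_mult: "x \<in> G m \<Longrightarrow> y \<in> G m' \<Longrightarrow> x * y \<in> G (m + m')"
  using grading by (elim conjE) blast

lemma homogeneous_decomposition:
  "a \<in> A \<Longrightarrow> \<exists>D f. finite D \<and> (\<forall>m\<in>D. f m \<in> G m) \<and> a = (\<Sum>m\<in>D. f m)"
  using grading by (elim conjE) blast

lemma homogeneous_independence:
  "finite D \<Longrightarrow> \<forall>m\<in>D. f m \<in> G m \<Longrightarrow> (\<Sum>m\<in>D. f m) = 0 \<Longrightarrow> m \<in> D \<Longrightarrow> f m = 0"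
  using grading by (elim conjE) blast

lemma minus_one_in_G0: "-1 \<in> G 0"
  using grading unfolding subfield_def by (elim conjE) blast

lemma A_generated: "\<exists>S0. A = alg_gen k S0"
  using grading by (elim conjE) blast

lemma A_add: "x \<in> A \<Longrightarrow> y \<in> A \<Longrightarrow> x + y \<in> A"
  using A_generated alg_gen.add by metis

lemma A_mult: "x \<in> A \<Longrightarrow> y \<in> A \<Longrightarrow> x * y \<in> A"
  using A_generated alg_gen.mult by metis

lemma A_diff: "x \<in> A \<Longrightarrow> y \<in> A \<Longrightarrow> x - y \<in> A"
  using A_add[of x "-1 * y"] A_mult[OF G_in_A[OF minus_one_in_G0], of y] by simp

lemma G_diff: "x \<in> G m \<Longrightarrow> y \<in> G m \<Longrightarrow> x - y \<in> G m"
  using G_add[of x m "-1 * y"] G_mult[OF minus_one_in_G0, of y m] by simp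

lemma sum_in_A: "finite D \<Longrightarrow> \<forall>m\<in>D. f m \<in> A \<Longrightarrow> (\<Sum>m\<in>D. f m) \<in> A"
  by (induction D rule: finite_induct) (auto simp: A_add G_in_A[OF G_zero])

lemma weightI: "x \<in> G m \<Longrightarrow> x \<noteq> 0 \<Longrightarrow> m \<in> S"
  unfolding weights_def by auto

lemma weight_witness: "m \<in> S \<Longrightarrow> \<exists>x\<in>G m. x \<noteq> 0"
  unfolding weights_def using G_zero by blast

lemma zero_outside_weights: "m \<notin> S \<Longrightarrow> x \<in> G m \<Longrightarrow> x = 0"
  using weightI by blast

lemma weights_add: "m \<in> S \<Longrightarrow> m' \<in> S \<Longrightarrow> m + m' \<in> S"
  by (meson G_mult weight_witness weightI mult_eq_0_iff)

(* The action is effective: S generates M, hence every degree is a difference of weights. *)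
lemma weights_differences: "\<exists>p q. p \<in> S \<and> q \<in> S \<and> v = p - q"
proof -
  have zero: "0 \<in> S" using weightI[OF minus_one_in_G0] by simp
  have "w \<in> group_gen S \<Longrightarrow> \<exists>p q. p \<in> S \<and> q \<in> S \<and> w = p - q" for w
  proof (induction rule: group_gen.induct)
    case (add x y)
    then obtain p q p' q' where "p \<in> S" "q \<in> S" "x = p - q" "p' \<in> S" "q' \<in> S" "y = p' - q'"
      by blast
    then show ?case
      by (intro exI[of _ "p + p'"] exI[of _ "q + q'"]) (auto simp: weights_add algebra_simps)
  qed (use zero in force)+
  moreover have "group_gen S = UNIV" using grading unfolding weights_def by (elim conjE) blast
  ultimately show ?thesis by blast
qed

lemma independence_inj:
  assumes "finite I" "inj_on g I" "\<forall>i\<in>I. z i \<in> G (g i)" "(\<Sum>i\<in>I. z i) = 0" "i \<in> I"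
  shows "z i = 0"
proof -
  define f where "f \<mu> = z (the_inv_into I g \<mu>)" for \<mu>
  have fg: "f (g j) = z j" if "j \<in> I" for j
    unfolding f_def using the_inv_into_f_f[OF assms(2) that] by simp
  have "(\<Sum>\<mu>\<in>g ` I. f \<mu>) = (\<Sum>j\<in>I. f (g j))" using sum.reindex[OF assms(2)] by simp
  also have "\<dots> = 0" using assms(4) fg by simp
  finally have "(\<Sum>\<mu>\<in>g ` I. f \<mu>) = 0" .
  moreover have "\<forall>\<mu>\<in>g ` I. f \<mu> \<in> G \<mu>" using fg assms(3) by auto
  ultimately have "f (g i) = 0"
    using homogeneous_independence[OF finite_imageI[OF assms(1)]] assms(5) by blast
  then show ?thesis using fg assms(5) by simp
qed

lemma additive_endo_zero: "additive_endo A T \<Longrightarrow> T 0 = 0"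
  unfolding additive_endo_def using G_in_A[OF G_zero] by (metis add.right_neutral add_left_imp_eq)

lemma additive_endo_sum:
  assumes T: "additive_endo A T"
  shows "finite D \<Longrightarrow> \<forall>m\<in>D. f m \<in> A \<Longrightarrow> T (\<Sum>m\<in>D. f m) = (\<Sum>m\<in>D. T (f m))"
proof (induction D rule: finite_induct)
  case empty then show ?case using additive_endo_zero[OF T] by simp
next
  case (insert x F)
  then have "(\<Sum>m\<in>F. f m) \<in> A" using sum_in_A by blast
  then show ?case using insert T unfolding additive_endo_def by simp
qed

lemma additive_endo_funpow: "additive_endo A T \<Longrightarrow> additive_endo A (T ^^ n)"
  by (induction n) (auto simp: additive_endo_def)

lemma derivation_additive: "is_derivation k A d \<Longrightarrow> additive_endo A d"
  unfolding is_derivation_def additive_endo_def by blast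

lemma zero_on_homogeneous:
  assumes T: "additive_endo A T" and zero: "\<And>m x. x \<in> G m \<Longrightarrow> T x = 0" and a: "a \<in> A"
  shows "T a = 0"
proof -
  obtain D f where D: "finite D" "\<forall>m\<in>D. f m \<in> G m" "a = (\<Sum>m\<in>D. f m)"
    using homogeneous_decomposition[OF a] by blast
  then have "T a = (\<Sum>m\<in>D. T (f m))" using additive_endo_sum[OF T] G_in_A by blast
  also have "\<dots> = 0" using zero D(2) by (intro sum.neutral) blast
  finally show ?thesis .
qed

lemma homogeneous_funpow:
  assumes "\<And>m x. x \<in> G m \<Longrightarrow> T x \<in> G (m + e)"
  shows "x \<in> G m \<Longrightarrow> (T ^^ n) x \<in> G (iter_shift e n m)"
  by (induction n) (auto simp: assms)

lemma locally_nilpotent_from_homogeneous: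
  assumes T: "additive_endo A T" and hom: "\<And>m x. x \<in> G m \<Longrightarrow> \<exists>N. \<forall>n\<ge>N. (T ^^ n) x = 0"
  shows "locally_nilpotent A T"
  unfolding locally_nilpotent_def
proof
  fix a assume "a \<in> A"
  then obtain D f where D: "finite D" "\<forall>m\<in>D. f m \<in> G m" "a = (\<Sum>m\<in>D. f m)"
    using homogeneous_decomposition by blast
  have "\<forall>m\<in>D. \<exists>N. \<forall>n\<ge>N. (T ^^ n) (f m) = 0" using hom D(2) by blast
  then obtain N where N: "\<forall>m\<in>D. \<forall>n\<ge>N m. (T ^^ n) (f m) = 0" by (metis bchoice)
  define n where "n = (\<Sum>m\<in>D. N m)"
  have "\<forall>m\<in>D. N m \<le> n" unfolding n_def using D(1) by (simp add: member_le_sum)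
  then have "\<forall>m\<in>D. (T ^^ n) (f m) = 0" using N by blast
  moreover have "(T ^^ n) a = (\<Sum>m\<in>D. (T ^^ n) (f m))"
    using additive_endo_sum[OF additive_endo_funpow[OF T] D(1)] D(2,3) G_in_A by blast
  ultimately show "\<exists>n. (T ^^ n) a = 0" by auto
qed

lemma locally_nilpotent_by_weight:
  fixes P :: "int^'n \<Rightarrow> int"
  assumes T: "additive_endo A T" and P_nonneg: "\<And>m. m \<in> S \<Longrightarrow> P m \<ge> 0"
    and drop: "\<And>m x. x \<in> G m \<Longrightarrow> \<exists>m1 m2 y1 y2. y1 \<in> G m1 \<and> y2 \<in> G m2 \<and>
                 P m1 < P m \<and> P m2 < P m \<and> T x = y1 + y2"
  shows "locally_nilpotent A T"
proof -
  have bound: "(T ^^ n) x = 0" if "x \<in> G m" "P m < int n" for n m x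
    using that
  proof (induction n arbitrary: m x)
    case 0
    then show ?case using P_nonneg zero_outside_weights by force
  next
    case (Suc n)
    obtain m1 m2 y1 y2 where y: "y1 \<in> G m1" "y2 \<in> G m2" "P m1 < P m" "P m2 < P m" "T x = y1 + y2"
      using drop[OF Suc.prems(1)] by blast
    have "(T ^^ Suc n) x = (T ^^ n) (y1 + y2)" using y(5) by (simp add: funpow_Suc_right del: funpow.simps)
    also have "\<dots> = (T ^^ n) y1 + (T ^^ n) y2"
      using additive_endo_funpow[OF T, of n] y G_in_A unfolding additive_endo_def by blast
    also have "\<dots> = 0" using Suc.IH[OF y(1)] Suc.IH[OF y(2)] y(3,4) Suc.prems(2) by simp
    finally show ?case .
  qed
  show ?thesis
  proof (rule locally_nilpotent_from_homogeneous[OF T])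
    fix m x assume "x \<in> G m"
    then show "\<exists>N. \<forall>n\<ge>N. (T ^^ n) x = 0" using bound by (intro exI[of _ "nat (P m + 1)"]) auto
  qed
qed

(* Fiber type means: on every weight space d is multiplication by one element phi m, and by the
   Leibniz rule phi is additive on the weights. *)
lemma fiber_type_eigenvalue:
  assumes der: "is_derivation k A d" and ft: "fiber_type G d"
  obtains \<phi> where "\<And>m m'. m \<in> S \<Longrightarrow> m' \<in> S \<Longrightarrow> \<phi> (m + m') = \<phi> m + \<phi> m'"
    and "\<And>m x. m \<in> S \<Longrightarrow> x \<in> G m \<Longrightarrow> d x = \<phi> m * x"
proof -
  define sel where "sel m = (SOME x. x \<in> G m \<and> x \<noteq> 0)" for m
  have sel: "sel m \<in> G m" "sel m \<noteq> 0" if "m \<in> S" for m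
    using someI_ex[OF weight_witness[OF that, unfolded Bex_def]] unfolding sel_def by blast+
  define \<phi> where "\<phi> m = d (sel m) / sel m" for m
  have eigen: "d x = \<phi> m * x" if "m \<in> S" "x \<in> G m" for m x
  proof -
    have "frac_ext d x (sel m) = 0" using ft that sel unfolding fiber_type_def by blast
    then have "d x * sel m = x * d (sel m)" using sel[OF that(1)] unfolding frac_ext_def by simp
    then show ?thesis unfolding \<phi>_def using sel[OF that(1)] by (simp add: field_simps)
  qed
  have add: "\<phi> (m + m') = \<phi> m + \<phi> m'" if hm: "m \<in> S" and hm': "m' \<in> S" for m m'
  proof -
    obtain x y where xy: "x \<in> G m" "x \<noteq> 0" "y \<in> G m'" "y \<noteq> 0"
      using weight_witness[OF hm] weight_witness[OF hm'] by blast
    have "\<phi> (m + m') * (x * y) = d (x * y)"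
      using eigen[OF weights_add[OF hm hm'] G_mult[OF xy(1,3)]] by simp
    also have "\<dots> = x * d y + y * d x" using der G_in_A xy unfolding is_derivation_def by blast
    also have "\<dots> = (\<phi> m + \<phi> m') * (x * y)" using eigen hm hm' xy by (simp add: algebra_simps)
    finally show ?thesis using xy by simp
  qed
  show thesis by (rule that[OF add eigen])
qed

lemma fiber_type_additive_eigenvalue:
  assumes der: "is_derivation k A d" and ft: "fiber_type G d"
  obtains \<Phi> where "\<And>u v. \<Phi> (u + v) = \<Phi> u + \<Phi> v" and "\<And>m x. x \<in> G m \<Longrightarrow> d x = \<Phi> m * x"
proof -
  obtain \<phi> where add: "\<And>m m'. m \<in> S \<Longrightarrow> m' \<in> S \<Longrightarrow> \<phi> (m + m') = \<phi> m + \<phi> m'"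
    and eigen: "\<And>m x. m \<in> S \<Longrightarrow> x \<in> G m \<Longrightarrow> d x = \<phi> m * x"
    using fiber_type_eigenvalue[OF der ft] by blast
  obtain \<Phi> where \<Phi>_add: "\<And>u v. \<Phi> (u + v) = \<Phi> u + \<Phi> v" and \<Phi>_\<phi>: "\<And>m. m \<in> S \<Longrightarrow> \<Phi> m = \<phi> m"
    using extend_additive[of S \<phi>, OF weights_add weights_differences add] by blast
  have "d x = \<Phi> m * x" if "x \<in> G m" for m x
  proof (cases "m \<in> S")
    case True then show ?thesis using eigen \<Phi>_\<phi> that by simp
  next
    case False
    then have "x = 0" using zero_outside_weights that by blast
    then show ?thesis using additive_endo_zero[OF derivation_additive[OF der]] by simp
  qed
  with \<Phi>_add show thesis by (rule that)
qed

lemma nilpotent_eigenvalue: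
  assumes lnd: "locally_nilpotent A d" and hom: "\<And>m x. x \<in> G m \<Longrightarrow> d x \<in> G (m + e)"
    and add: "\<And>u v. \<Phi> (u + v) = \<Phi> u + \<Phi> v" and eigen: "\<And>m x. x \<in> G m \<Longrightarrow> d x = \<Phi> m * x"
    and m: "m \<in> S"
  shows "\<exists>j::nat. \<Phi> m + of_nat j * \<Phi> e = 0"
proof -
  have power: "(d ^^ n) x = (\<Prod>j<n. \<Phi> (iter_shift e j m)) * x" if x: "x \<in> G m" for x n
  proof (induction n)
    case (Suc n)
    have "(d ^^ Suc n) x = \<Phi> (iter_shift e n m) * (d ^^ n) x"
      using eigen homogeneous_funpow[of d e, OF hom x] by simp
    then show ?case using Suc by (simp add: algebra_simps)
  qed simp
  obtain x where x: "x \<in> G m" "x \<noteq> 0" using weight_witness[OF m] by blast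
  then obtain n where "(d ^^ n) x = 0" using lnd G_in_A unfolding locally_nilpotent_def by blast
  then have "(\<Prod>j<n. \<Phi> (iter_shift e j m)) = 0" using power[OF x(1)] x(2) by simp
  then obtain j where "\<Phi> (iter_shift e j m) = 0" by auto
  then show ?thesis using additive_iter_shift[of \<Phi>, OF add] by metis
qed

end

locale diagonal_derivation = graded_algebra k A G
  for k A :: "'a::field_char_0 set" and G :: "int^'n::finite \<Rightarrow> 'a set" +
  fixes d :: "'a \<Rightarrow> 'a" and \<psi> :: "int^'n \<Rightarrow> int" and c :: 'a and e :: "int^'n"
  assumes c_nonzero: "c \<noteq> 0"
    and \<psi>_add: "\<And>u v. \<psi> (u + v) = \<psi> u + \<psi> v"
    and \<psi>_degree: "\<psi> e = -1"
    and \<psi>_nonneg: "\<And>m. m \<in> weights G \<Longrightarrow> \<psi> m \<ge> 0"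
    and \<psi>_positive: "\<exists>m\<in>weights G. \<psi> m > 0"
    and act: "\<And>m x. x \<in> G m \<Longrightarrow> d x = of_int (\<psi> m) * c * x"
    and homogeneous: "\<And>m x. x \<in> G m \<Longrightarrow> d x \<in> G (m + e)"
    and additive: "additive_endo A d"
begin

lemma d_zero [simp]: "d 0 = 0"
  using act[OF G_zero[of 0]] by simp

lemma \<psi>_iter_shift: "\<psi> (iter_shift v j m) = \<psi> m + int j * \<psi> v"
  using additive_iter_shift[of \<psi>] \<psi>_add by simp

(* Applying d at most psi(m) times to a nonzero element of A_m does not kill it, so the
   degrees m + j e with j <= psi(m) are weights. *)
lemma iter_shift_weight: "m \<in> S \<Longrightarrow> int j \<le> \<psi> m \<Longrightarrow> iter_shift e j m \<in> S"
proof (induction j)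
  case (Suc j)
  then have weight: "iter_shift e j m \<in> S" by simp
  obtain x where x: "x \<in> G (iter_shift e j m)" "x \<noteq> 0" using weight_witness[OF weight] by blast
  have "\<psi> (iter_shift e j m) \<ge> 1" using Suc.prems \<psi>_iter_shift[of e j m] \<psi>_degree by simp
  then have "d x \<noteq> 0" using act[OF x(1)] c_nonzero x(2) by simp
  then show ?case using homogeneous[OF x(1)] weightI by simp
qed simp

end

(* Local nilpotency makes the eigenvalues integral: on each weight Phi is a natural multiple
   of c = - Phi e, hence Phi = psi * c for an integer form psi with psi e = -1 that is
   nonnegative on the weights (and positive somewhere, as Phi does not vanish on S). *)
lemma (in graded_algebra) nilpotent_eigenvalues_integral:
  assumes lnd: "locally_nilpotent A d" and hom: "\<And>m x. x \<in> G m \<Longrightarrow> d x \<in> G (m + e)"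
    and add: "\<And>u v. \<Phi> (u + v) = \<Phi> u + \<Phi> v" and eigen: "\<And>m x. x \<in> G m \<Longrightarrow> d x = \<Phi> m * x"
    and not_all_zero: "\<exists>m\<in>S. \<Phi> m \<noteq> 0"
  obtains \<psi> c where "\<And>u v. \<psi> (u + v) = \<psi> u + \<psi> v" and "\<psi> e = -1"
    and "\<And>m. m \<in> S \<Longrightarrow> \<psi> m \<ge> 0" and "\<exists>m\<in>S. \<psi> m > 0"
    and "c \<noteq> 0" and "\<And>v. \<Phi> v = of_int (\<psi> v) * c"
proof -
  define c where "c = - \<Phi> e"
  have on_weights: "\<exists>j::nat. \<Phi> m = of_nat j * c" if m: "m \<in> S" for m
  proof -
    obtain j :: nat where "\<Phi> m + of_nat j * \<Phi> e = 0"
      using nilpotent_eigenvalue[OF lnd hom add eigen m] by blast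
    then have "\<Phi> m = of_nat j * c" unfolding c_def by (simp add: eq_neg_iff_add_eq_0)
    then show ?thesis by blast
  qed
  have c_nonzero: "c \<noteq> 0" using on_weights not_all_zero by force
  have "\<exists>z::int. \<Phi> v = of_int z * c" for v
  proof -
    obtain p q where pq: "p \<in> S" "q \<in> S" "v = p - q" using weights_differences by blast
    obtain jp jq :: nat where "\<Phi> p = of_nat jp * c" "\<Phi> q = of_nat jq * c" using on_weights pq by meson
    moreover have "\<Phi> v = \<Phi> p - \<Phi> q" unfolding pq(3) by (rule additive_diff[OF add])
    ultimately have "\<Phi> v = of_int (int jp - int jq) * c" by (simp add: algebra_simps)
    then show ?thesis by blast
  qed
  then obtain \<psi> where \<psi>_add: "\<And>u v. \<psi> (u + v) = \<psi> u + \<psi> v" and \<Phi>_\<psi>: "\<And>v. \<Phi> v = of_int (\<psi> v) * c"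
    using integer_coordinate[OF c_nonzero add] by blast
  have "of_int (\<psi> e) * c = of_int (-1) * c" using \<Phi>_\<psi>[of e] unfolding c_def by simp
  then have \<psi>_degree: "\<psi> e = -1" using c_nonzero mult_cancel_right of_int_eq_iff by metis
  have \<psi>_nonneg: "\<psi> m \<ge> 0" if m: "m \<in> S" for m
  proof -
    obtain j :: nat where "\<Phi> m = of_nat j * c" using on_weights[OF m] by blast
    then have "of_int (\<psi> m) = (of_int (int j) :: 'a)" using \<Phi>_\<psi>[of m] c_nonzero by simp
    then have "\<psi> m = int j" by (simp only: of_int_eq_iff)
    then show ?thesis by simp
  qed
  have \<psi>_positive: "\<exists>m\<in>S. \<psi> m > 0"
  proof -
    obtain m where m: "m \<in> S" "\<Phi> m \<noteq> 0" using not_all_zero by blast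
    then have "\<psi> m \<noteq> 0" using \<Phi>_\<psi>[of m] by auto
    then show ?thesis using \<psi>_nonneg[OF m(1)] m(1) by force
  qed
  show thesis by (rule that[OF \<psi>_add \<psi>_degree \<psi>_nonneg \<psi>_positive c_nonzero \<Phi>_\<psi>])
qed

lemma (in graded_algebra) fiber_type_LND_diagonal:
  assumes hd: "homogeneous_LND_fiber_type k A G d" and nonzero: "\<exists>a\<in>A. d a \<noteq> 0"
  obtains \<psi> c e where "diagonal_derivation k A G d \<psi> c e"
proof -
  have der: "is_derivation k A d" and lnd: "locally_nilpotent A d" and ft: "fiber_type G d"
    using hd unfolding homogeneous_LND_fiber_type_def by blast+
  obtain e where hom: "\<And>m x. x \<in> G m \<Longrightarrow> d x \<in> G (m + e)"
    using hd unfolding homogeneous_LND_fiber_type_def homogeneous_of_degree_def by blast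
  obtain \<Phi> where add: "\<And>u v. \<Phi> (u + v) = \<Phi> u + \<Phi> v" and eigen: "\<And>m x. x \<in> G m \<Longrightarrow> d x = \<Phi> m * x"
    using fiber_type_additive_eigenvalue[OF der ft] by blast
  have "\<exists>m\<in>S. \<Phi> m \<noteq> 0"
  proof (rule ccontr)
    assume "\<not> ?thesis"
    then have "d x = 0" if "x \<in> G m" for m x
      using eigen[OF that] zero_outside_weights[OF _ that] by (cases "m \<in> S") auto
    then show False using zero_on_homogeneous[OF derivation_additive[OF der]] nonzero by blast
  qed
  then obtain \<psi> c where \<psi>: "\<And>u v. \<psi> (u + v) = \<psi> u + \<psi> v" "\<psi> e = -1"
      "\<And>m. m \<in> S \<Longrightarrow> \<psi> m \<ge> 0" "\<exists>m\<in>S. \<psi> m > 0" "c \<noteq> 0" and \<Phi>_\<psi>: "\<And>v. \<Phi> v = of_int (\<psi> v) * c"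
    using nilpotent_eigenvalues_integral[OF lnd hom add eigen] by blast
  have act: "d x = of_int (\<psi> m) * c * x" if "x \<in> G m" for m x
    using eigen[OF that] \<Phi>_\<psi>[of m] by simp
  have "diagonal_derivation k A G d \<psi> c e"
    by (intro diagonal_derivation.intro graded_algebra_axioms diagonal_derivation_axioms.intro
        \<psi> act hom derivation_additive[OF der])
  then show thesis by (rule that)
qed

(* The coefficients in the expansion of (d1 + d2)^n on a homogeneous element, indexed by the
   number i of factors d1; p and q are the integer eigenvalues of d1 and d2 on the pieces. *)
fun expansion_coeff :: "(nat \<Rightarrow> nat \<Rightarrow> int) \<Rightarrow> (nat \<Rightarrow> nat \<Rightarrow> int) \<Rightarrow> nat \<Rightarrow> nat \<Rightarrow> int" where
  "expansion_coeff p q 0 i = (if i = 0 then 1 else 0)"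
| "expansion_coeff p q (Suc n) i =
     (if i = 0 then 0 else expansion_coeff p q n (i - 1) * p n (i - 1)) + expansion_coeff p q n i * q n i"

lemma expansion_coeff_beyond: "n < i \<Longrightarrow> expansion_coeff p q n i = 0"
  by (induction n arbitrary: i) auto

locale derivation_pair = graded_algebra k A G +
  D1: diagonal_derivation k A G d1 \<psi>1 c1 e1 + D2: diagonal_derivation k A G d2 \<psi>2 c2 e2
  for k A :: "'a::field_char_0 set" and G :: "int^'n::finite \<Rightarrow> 'a set"
    and d1 \<psi>1 c1 e1 d2 \<psi>2 c2 e2
begin

abbreviation "der_sum \<equiv> (\<lambda>x. d1 x + d2 x)"
abbreviation "der_comm \<equiv> (\<lambda>x. d1 (d2 x) - d2 (d1 x))"

lemma swap: "derivation_pair k A G d2 \<psi>2 c2 e2 d1 \<psi>1 c1 e1"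
  using D1.diagonal_derivation_axioms D2.diagonal_derivation_axioms
  by (simp add: derivation_pair_def diagonal_derivation_def)

lemma sum_additive: "additive_endo A der_sum"
  using D1.additive D2.additive unfolding additive_endo_def by (auto simp: A_add)

lemma comm_additive: "additive_endo A der_comm"
  using D1.additive D2.additive unfolding additive_endo_def by (auto simp: A_diff)

(* If psi2 drops along e1, every weight m satisfies a linear relation between psi1 and psi2:
   moving from m along e2 until psi2 = 0 and then along e1 stays inside the weights, which
   forces psi1 to vanish already after the first move. *)
lemma weight_relation_if_negative:
  assumes neg: "\<psi>2 e1 < 0" and m: "m \<in> S"
  shows "\<psi>1 m + \<psi>1 e2 * \<psi>2 m = 0"
proof -
  define m' where "m' = iter_shift e2 (nat (\<psi>2 m)) m"
  have m': "m' \<in> S" unfolding m'_def using D2.iter_shift_weight[OF m] D2.\<psi>_nonneg[OF m] by simp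
  have \<psi>_m': "\<psi>2 m' = 0" "\<psi>1 m' = \<psi>1 m + \<psi>1 e2 * \<psi>2 m"
    unfolding m'_def using D1.\<psi>_iter_shift D2.\<psi>_iter_shift D2.\<psi>_degree D2.\<psi>_nonneg[OF m]
    by (simp_all add: algebra_simps)
  define m'' where "m'' = iter_shift e1 (nat (\<psi>1 m')) m'"
  have "m'' \<in> S" unfolding m''_def using D1.iter_shift_weight[OF m'] D1.\<psi>_nonneg[OF m'] by simp
  then have "0 \<le> \<psi>2 m''" by (rule D2.\<psi>_nonneg)
  also have "\<psi>2 m'' = int (nat (\<psi>1 m')) * \<psi>2 e1" unfolding m''_def using D2.\<psi>_iter_shift \<psi>_m' by simp
  finally have "\<not> int (nat (\<psi>1 m')) > 0"
    using mult_pos_neg[of "int (nat (\<psi>1 m'))" "\<psi>2 e1"] neg by linarith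
  then show ?thesis using D1.\<psi>_nonneg[OF m'] \<psi>_m' by simp
qed

lemma forms_equal_if_negative:
  assumes neg: "\<psi>2 e1 < 0"
  shows "\<psi>1 = \<psi>2"
proof -
  obtain m0 where m0: "m0 \<in> S" "\<psi>1 m0 > 0" using D1.\<psi>_positive by blast
  have "\<psi>1 e2 * \<psi>2 m0 < 0" using weight_relation_if_negative[OF neg m0(1)] m0(2) by simp
  then have e2_neg: "\<psi>1 e2 < 0"
    using D2.\<psi>_nonneg[OF m0(1)] mult_nonneg_nonneg[of "\<psi>1 e2" "\<psi>2 m0"] by linarith
  have linear: "\<psi>1 w = - \<psi>1 e2 * \<psi>2 w" for w
  proof -
    obtain p q where pq: "p \<in> S" "q \<in> S" "w = p - q" using weights_differences by blast
    have w1: "\<psi>1 w = \<psi>1 p - \<psi>1 q" and w2: "\<psi>2 w = \<psi>2 p - \<psi>2 q"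
      unfolding pq(3) by (rule additive_diff, rule D1.\<psi>_add, rule additive_diff, rule D2.\<psi>_add)
    show ?thesis unfolding w1 w2
      using weight_relation_if_negative[OF neg pq(1)] weight_relation_if_negative[OF neg pq(2)]
      by (simp add: algebra_simps)
  qed
  have "\<psi>1 e2 * \<psi>2 e1 = 1" using linear[of e1] D1.\<psi>_degree by simp
  then have "\<psi>1 e2 = -1" using e2_neg neg unfolding zmult_eq_1_iff by linarith
  show ?thesis
  proof
    fix w show "\<psi>1 w = \<psi>2 w" using linear[of w] \<open>\<psi>1 e2 = -1\<close> by simp
  qed
qed

lemma comm_homogeneous:
  assumes x: "x \<in> G m"
  shows "der_comm x \<in> G (m + (e1 + e2))"
proof -
  have "d1 (d2 x) \<in> G (m + (e1 + e2))" using D1.homogeneous[OF D2.homogeneous[OF x]] by (simp add: ac_simps)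
  moreover have "d2 (d1 x) \<in> G (m + (e1 + e2))"
    using D2.homogeneous[OF D1.homogeneous[OF x]] by (simp add: ac_simps)
  ultimately show ?thesis by (rule G_diff)
qed

lemma both_locally_nilpotent:
  fixes P :: "int^'n \<Rightarrow> int"
  assumes P_add: "\<And>u v. P (u + v) = P u + P v" and P1: "P e1 = -1" and P2: "P e2 = -1"
    and P_nonneg: "\<And>m. m \<in> S \<Longrightarrow> P m \<ge> 0"
  shows "locally_nilpotent A der_sum \<and> locally_nilpotent A der_comm"
proof
  show "locally_nilpotent A der_sum"
  proof (rule locally_nilpotent_by_weight[OF sum_additive P_nonneg])
    fix m x assume x: "x \<in> G m"
    show "\<exists>m1 m2 y1 y2. y1 \<in> G m1 \<and> y2 \<in> G m2 \<and> P m1 < P m \<and> P m2 < P m \<and> der_sum x = y1 + y2"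
      using D1.homogeneous[OF x] D2.homogeneous[OF x] P_add P1 P2 by fastforce
  qed
  show "locally_nilpotent A der_comm"
  proof (rule locally_nilpotent_by_weight[OF comm_additive P_nonneg])
    fix m x assume x: "x \<in> G m"
    show "\<exists>m1 m2 y1 y2. y1 \<in> G m1 \<and> y2 \<in> G m2 \<and> P m1 < P m \<and> P m2 < P m \<and> der_comm x = y1 + y2"
      using comm_homogeneous[OF x] P_add P1 P2 G_zero
      by (intro exI[of _ "m + (e1 + e2)"] exI[of _ "der_comm x"] exI[of _ 0]) auto
  qed
qed

definition comm_form :: "int^'n \<Rightarrow> int" where
  "comm_form v = \<psi>1 e2 * \<psi>2 v - \<psi>2 e1 * \<psi>1 v"

lemma comm_act:
  assumes x: "x \<in> G m"
  shows "der_comm x = of_int (comm_form m) * (c1 * c2) * x"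
proof -
  have "d1 (d2 x) = of_int (\<psi>1 (m + e2)) * c1 * (of_int (\<psi>2 m) * c2 * x)"
    using D1.act[OF D2.homogeneous[OF x]] D2.act[OF x] by simp
  moreover have "d2 (d1 x) = of_int (\<psi>2 (m + e1)) * c2 * (of_int (\<psi>1 m) * c1 * x)"
    using D2.act[OF D1.homogeneous[OF x]] D1.act[OF x] by simp
  ultimately show ?thesis by (simp add: comm_form_def D1.\<psi>_add D2.\<psi>_add algebra_simps)
qed

lemma comm_form_shift:
  "comm_form (iter_shift (e1 + e2) j m) = comm_form m + int j * (\<psi>2 e1 - \<psi>1 e2)"
  unfolding comm_form_def D1.\<psi>_iter_shift D2.\<psi>_iter_shift
  by (simp add: D1.\<psi>_add D2.\<psi>_add D1.\<psi>_degree D2.\<psi>_degree algebra_simps)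

lemma comm_power:
  assumes x: "x \<in> G m"
  shows "(der_comm ^^ n) x = (\<Prod>j<n. of_int (comm_form (iter_shift (e1 + e2) j m)) * (c1 * c2)) * x"
proof (induction n)
  case (Suc n)
  have "(der_comm ^^ n) x \<in> G (iter_shift (e1 + e2) n m)"
    using homogeneous_funpow[of der_comm "e1 + e2", OF comm_homogeneous x] by blast
  then show ?case using comm_act Suc by (simp add: algebra_simps)
qed simp

(* If psi2(e1) >= psi1(e2) >= 1, comm_form stays positive along the (e1 + e2)-orbit of the weight
   obtained by moving along e1 until psi1 vanishes. *)
lemma comm_form_positive_orbit:
  assumes a: "\<psi>1 e2 \<ge> 1" and ge: "\<psi>2 e1 \<ge> \<psi>1 e2"
  shows "\<exists>m0\<in>S. \<forall>j. comm_form (iter_shift (e1 + e2) j m0) > 0"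
proof -
  have ge1: "x * y \<ge> 1" if "x \<ge> 1" "y \<ge> 1" for x y :: int
    using mult_mono[of 1 x 1 y] that by simp
  obtain m1 where m1: "m1 \<in> S" "\<psi>1 m1 > 0" using D1.\<psi>_positive by blast
  define m0 where "m0 = iter_shift e1 (nat (\<psi>1 m1)) m1"
  have m0: "m0 \<in> S" unfolding m0_def using D1.iter_shift_weight[OF m1(1)] m1(2) by simp
  have \<psi>_m0: "\<psi>1 m0 = 0" "\<psi>2 m0 = \<psi>2 m1 + int (nat (\<psi>1 m1)) * \<psi>2 e1"
    unfolding m0_def using D1.\<psi>_iter_shift D2.\<psi>_iter_shift D1.\<psi>_degree m1(2) by simp_all
  have "int (nat (\<psi>1 m1)) * \<psi>2 e1 \<ge> 1" using ge1 m1(2) a ge by simp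
  then have "\<psi>2 m0 \<ge> 1" using \<psi>_m0 D2.\<psi>_nonneg[OF m1(1)] by simp
  then have start: "comm_form m0 \<ge> 1" unfolding comm_form_def using \<psi>_m0(1) ge1 a by simp
  have "comm_form (iter_shift (e1 + e2) j m0) > 0" for j
    using comm_form_shift[of j m0] start ge mult_nonneg_nonneg[of "int j" "\<psi>2 e1 - \<psi>1 e2"] by linarith
  then show ?thesis using m0 by blast
qed

lemma comm_not_locally_nilpotent:
  assumes a: "\<psi>1 e2 \<ge> 1" and b: "\<psi>2 e1 \<ge> 1"
  shows "\<not> locally_nilpotent A der_comm"
proof -
  have "\<exists>m0\<in>S. \<forall>j. comm_form (iter_shift (e1 + e2) j m0) \<noteq> 0"
  proof (cases "\<psi>1 e2 \<le> \<psi>2 e1")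
    case True
    then show ?thesis using comm_form_positive_orbit[OF a True] by (metis less_irrefl)
  next
    case False
    interpret swapped: derivation_pair k A G d2 \<psi>2 c2 e2 d1 \<psi>1 c1 e1 by (rule swap)
    obtain m0 where m0: "m0 \<in> S" "\<forall>j. swapped.comm_form (iter_shift (e2 + e1) j m0) > 0"
      using swapped.comm_form_positive_orbit b False by fastforce
    have "swapped.comm_form v = - comm_form v" for v
      unfolding swapped.comm_form_def comm_form_def by simp
    then have "\<forall>j. comm_form (iter_shift (e1 + e2) j m0) < 0" using m0(2) by (simp add: add.commute)
    then show ?thesis using m0(1) by (metis less_irrefl)
  qed
  then obtain m0 where m0: "m0 \<in> S" "\<forall>j. comm_form (iter_shift (e1 + e2) j m0) \<noteq> 0" by blast
  obtain x0 where x0: "x0 \<in> G m0" "x0 \<noteq> 0" using weight_witness[OF m0(1)] by blast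
  have "(der_comm ^^ n) x0 \<noteq> 0" for n
    using comm_power[OF x0(1), of n] x0(2) m0(2) D1.c_nonzero D2.c_nonzero by simp
  then show ?thesis using x0(1) G_in_A unfolding locally_nilpotent_def by blast
qed

definition expansion_degree :: "int^'n \<Rightarrow> nat \<Rightarrow> nat \<Rightarrow> int^'n" where
  "expansion_degree m n i = iter_shift e1 i (iter_shift e2 (n - i) m)"

definition expansion_count :: "int^'n \<Rightarrow> nat \<Rightarrow> nat \<Rightarrow> int" where
  "expansion_count m = expansion_coeff (\<lambda>n i. \<psi>1 (expansion_degree m n i)) (\<lambda>n i. \<psi>2 (expansion_degree m n i))"

definition expansion_term :: "int^'n \<Rightarrow> 'a \<Rightarrow> nat \<Rightarrow> nat \<Rightarrow> 'a" where
  "expansion_term m x n i = c1 ^ i * c2 ^ (n - i) * of_int (expansion_count m n i) * x"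

lemma expansion_degree_Suc_Suc [simp]:
  "expansion_degree m (Suc n) (Suc i) = expansion_degree m n i + e1"
  unfolding expansion_degree_def by simp

lemma expansion_degree_Suc: "i \<le> n \<Longrightarrow> expansion_degree m (Suc n) i = expansion_degree m n i + e2"
  unfolding expansion_degree_def by (simp add: Suc_diff_le iter_shift_add)

lemma \<psi>1_expansion_degree: "\<psi>1 (expansion_degree m n i) = \<psi>1 m + int (n - i) * \<psi>1 e2 - int i"
  unfolding expansion_degree_def using D1.\<psi>_iter_shift D1.\<psi>_degree by simp

lemma expansion_count_Suc_0:
  "expansion_count m (Suc n) 0 = expansion_count m n 0 * \<psi>2 (expansion_degree m n 0)"
  unfolding expansion_count_def by simp

lemma expansion_count_Suc_Suc:
  "expansion_count m (Suc n) (Suc i) = expansion_count m n i * \<psi>1 (expansion_degree m n i)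
     + expansion_count m n (Suc i) * \<psi>2 (expansion_degree m n (Suc i))"
  unfolding expansion_count_def by simp

lemma expansion_count_beyond: "n < i \<Longrightarrow> expansion_count m n i = 0"
  unfolding expansion_count_def by (rule expansion_coeff_beyond)

lemma expansion_term_Suc:
  assumes mem: "\<And>i. expansion_term m x n i \<in> G (expansion_degree m n i)"
  shows "expansion_term m x (Suc n) i =
    (if i = 0 then 0 else d1 (expansion_term m x n (i - 1))) + d2 (expansion_term m x n i)"
proof -
  have d1: "d1 (expansion_term m x n j) = of_int (\<psi>1 (expansion_degree m n j)) * c1 * expansion_term m x n j" for j
    using D1.act[OF mem] .
  have d2: "d2 (expansion_term m x n j) = of_int (\<psi>2 (expansion_degree m n j)) * c2 * expansion_term m x n j" for j
    using D2.act[OF mem] .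
  show ?thesis
  proof (cases i)
    case 0
    show ?thesis unfolding 0
      by (simp only: d2, simp add: expansion_term_def expansion_count_Suc_0 algebra_simps)
  next
    case (Suc i')
    show ?thesis
    proof (cases "Suc i' \<le> n")
      case True
      then have "n - i' = Suc (n - Suc i')" by simp
      then show ?thesis unfolding Suc
        by (simp only: d1 d2, simp add: expansion_term_def expansion_count_Suc_Suc algebra_simps)
    next
      case False
      then have "expansion_count m n (Suc i') = 0" using expansion_count_beyond by simp
      then show ?thesis unfolding Suc
        by (simp only: d1 d2, simp add: expansion_term_def expansion_count_Suc_Suc algebra_simps)
    qed
  qed
qed

lemma expansion_term_homogeneous:
  assumes x: "x \<in> G m"
  shows "expansion_term m x n i \<in> G (expansion_degree m n i)"
proof (induction n arbitrary: i)
  case 0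
  then show ?case
    by (cases "i = 0") (auto simp: expansion_term_def expansion_count_def expansion_degree_def x)
next
  case (Suc n)
  have IH: "\<And>j. expansion_term m x n j \<in> G (expansion_degree m n j)" by (rule Suc.IH)
  note step = expansion_term_Suc[OF IH]
  show ?case
  proof (cases i)
    case 0
    then show ?thesis using step D2.homogeneous[OF IH[of 0]] expansion_degree_Suc[of 0 n m] by simp
  next
    case (Suc i')
    have first: "d1 (expansion_term m x n i') \<in> G (expansion_degree m (Suc n) i)"
      using D1.homogeneous[OF IH[of i']] Suc by simp
    have second: "d2 (expansion_term m x n i) \<in> G (expansion_degree m (Suc n) i)"
    proof (cases "i \<le> n")
      case True
      then show ?thesis using D2.homogeneous[OF IH[of i]] expansion_degree_Suc by simp
    next
      case False
      then show ?thesis using expansion_count_beyond by (simp add: expansion_term_def)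
    qed
    show ?thesis using step Suc G_add[OF first second] by simp
  qed
qed

lemma sum_power_expansion:
  assumes x: "x \<in> G m"
  shows "(der_sum ^^ n) x = (\<Sum>i\<le>n. expansion_term m x n i)"
proof (induction n)
  case 0
  then show ?case by (simp add: expansion_term_def expansion_count_def)
next
  case (Suc n)
  note mem = expansion_term_homogeneous[OF x, of n]
  have "(der_sum ^^ Suc n) x = der_sum (\<Sum>i\<le>n. expansion_term m x n i)" using Suc by simp
  also have "\<dots> = (\<Sum>i\<le>n. der_sum (expansion_term m x n i))"
    using additive_endo_sum[OF sum_additive finite_atMost] mem G_in_A by blast
  also have "\<dots> = (\<Sum>i\<le>n. d1 (expansion_term m x n i)) + (\<Sum>i\<le>n. d2 (expansion_term m x n i))"
    by (simp add: sum.distrib)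
  also have "(\<Sum>i\<le>n. d1 (expansion_term m x n i))
      = (\<Sum>i\<le>Suc n. if i = 0 then 0 else d1 (expansion_term m x n (i - 1)))"
    by (subst sum.atMost_Suc_shift) simp
  also have "(\<Sum>i\<le>n. d2 (expansion_term m x n i)) = (\<Sum>i\<le>Suc n. d2 (expansion_term m x n i))"
    using expansion_count_beyond[of n "Suc n"] by (simp add: expansion_term_def)
  also have "(\<Sum>i\<le>Suc n. if i = 0 then 0 else d1 (expansion_term m x n (i - 1)))
      + (\<Sum>i\<le>Suc n. d2 (expansion_term m x n i)) = (\<Sum>i\<le>Suc n. expansion_term m x (Suc n) i)"
    unfolding expansion_term_Suc[OF mem] by (simp add: sum.distrib)
  finally show ?case .
qed

lemma expansion_degree_weight:
  assumes x: "x \<in> G m" "x \<noteq> 0" and nonzero: "expansion_count m n i \<noteq> 0"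
  shows "expansion_degree m n i \<in> S"
  using weightI[OF expansion_term_homogeneous[OF x(1)]] x(2) nonzero D1.c_nonzero D2.c_nonzero
  by (simp add: expansion_term_def)

lemma expansion_products_nonneg:
  assumes x: "x \<in> G m" "x \<noteq> 0" and N: "expansion_count m n j \<ge> 0"
  shows "expansion_count m n j * \<psi>1 (expansion_degree m n j) \<ge> 0"
    and "expansion_count m n j * \<psi>2 (expansion_degree m n j) \<ge> 0"
  using N expansion_degree_weight[OF x, of n j] D1.\<psi>_nonneg D2.\<psi>_nonneg
  by (cases "expansion_count m n j = 0"; simp)+

lemma expansion_count_nonneg:
  assumes x: "x \<in> G m" "x \<noteq> 0"
  shows "expansion_count m n i \<ge> 0"
proof (induction n arbitrary: i)
  case 0
  then show ?case by (simp add: expansion_count_def)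
next
  case (Suc n)
  then show ?case using expansion_products_nonneg[OF x Suc.IH]
    by (cases i) (simp_all add: expansion_count_Suc_0 expansion_count_Suc_Suc)
qed

(* If psi1(e2) >= 1 and psi2(e1) >= 1, some coefficient stays positive: from a term on which
   d1 acts nontrivially follow d1, otherwise follow d2; the relevant form is then still >= 1. *)
lemma expansion_count_positive:
  assumes a: "\<psi>1 e2 \<ge> 1" and b: "\<psi>2 e1 \<ge> 1"
    and x: "x \<in> G m" "x \<noteq> 0" and m: "\<psi>1 m > 0"
  shows "\<exists>i\<le>n. expansion_count m n i > 0 \<and>
    (\<psi>1 (expansion_degree m n i) \<ge> 1 \<or> \<psi>2 (expansion_degree m n i) \<ge> 1)"
proof (induction n)
  case 0
  then show ?case using m by (intro exI[of _ 0]) (simp add: expansion_count_def expansion_degree_def)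
next
  case (Suc n)
  then obtain i where i: "i \<le> n" "expansion_count m n i > 0"
    "\<psi>1 (expansion_degree m n i) \<ge> 1 \<or> \<psi>2 (expansion_degree m n i) \<ge> 1" by blast
  have weight: "expansion_degree m n i \<in> S" using expansion_degree_weight[OF x] i(2) by simp
  note nonneg = D1.\<psi>_nonneg[OF weight] D2.\<psi>_nonneg[OF weight]
  note products = expansion_products_nonneg[OF x expansion_count_nonneg[OF x]]
  show ?case
  proof (cases "\<psi>1 (expansion_degree m n i) \<ge> 1")
    case True
    then have "expansion_count m n i * \<psi>1 (expansion_degree m n i) > 0" using i(2) by simp
    then have "expansion_count m (Suc n) (Suc i) > 0"
      using products(2)[of n "Suc i"] by (simp add: expansion_count_Suc_Suc)
    then show ?thesis using i(1) nonneg b by (intro exI[of _ "Suc i"]) (simp add: D2.\<psi>_add)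
  next
    case False
    then have "\<psi>2 (expansion_degree m n i) \<ge> 1" using i(3) by simp
    then have "expansion_count m n i * \<psi>2 (expansion_degree m n i) > 0" using i(2) by simp
    moreover have "expansion_count m (Suc n) i \<ge> expansion_count m n i * \<psi>2 (expansion_degree m n i)"
      using products(1) by (cases i) (simp_all add: expansion_count_Suc_0 expansion_count_Suc_Suc)
    ultimately have "expansion_count m (Suc n) i > 0" by simp
    then show ?thesis using i(1) nonneg a expansion_degree_Suc[OF i(1)]
      by (intro exI[of _ i]) (simp add: D1.\<psi>_add)
  qed
qed

(* Distinct terms of the expansion have distinct degrees, since psi1 separates them. *)
lemma expansion_degree_inj:
  assumes a: "\<psi>1 e2 \<noteq> -1"
  shows "inj_on (expansion_degree m n) {..n}"
proof (rule inj_onI)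
  fix i j assume ij: "i \<in> {..n}" "j \<in> {..n}" "expansion_degree m n i = expansion_degree m n j"
  then have "int (n - i) * \<psi>1 e2 - int i = int (n - j) * \<psi>1 e2 - int j"
    using \<psi>1_expansion_degree[of m n i] \<psi>1_expansion_degree[of m n j] by simp
  then have "(int n - int i) * \<psi>1 e2 - int i = (int n - int j) * \<psi>1 e2 - int j"
    using ij by (simp add: of_nat_diff)
  then have "(int j - int i) * (\<psi>1 e2 + 1) = 0" by (simp add: algebra_simps)
  then show "i = j" using a by simp
qed

lemma sum_not_locally_nilpotent:
  assumes a: "\<psi>1 e2 \<ge> 1" and b: "\<psi>2 e1 \<ge> 1"
  shows "\<not> locally_nilpotent A der_sum"
proof
  assume lnd: "locally_nilpotent A der_sum"
  obtain m where m: "m \<in> S" "\<psi>1 m > 0" using D1.\<psi>_positive by blast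
  obtain x where x: "x \<in> G m" "x \<noteq> 0" using weight_witness[OF m(1)] by blast
  obtain n where "(der_sum ^^ n) x = 0" using lnd x G_in_A unfolding locally_nilpotent_def by blast
  then have "(\<Sum>i\<le>n. expansion_term m x n i) = 0" using sum_power_expansion[OF x(1)] by simp
  moreover have "inj_on (expansion_degree m n) {..n}" using a by (intro expansion_degree_inj) simp
  ultimately have "expansion_term m x n i = 0" if "i \<le> n" for i
    using independence_inj[where I="{..n}" and g="expansion_degree m n" and z="expansion_term m x n"]
      expansion_term_homogeneous[OF x(1)] that by simp
  moreover obtain i where "i \<le> n" "expansion_count m n i > 0"
    using expansion_count_positive[OF a b x m(2)] by blast
  ultimately show False using x(2) D1.c_nonzero D2.c_nonzero by (simp add: expansion_term_def)
qed

lemma sum_lnd_iff_comm_lnd: "locally_nilpotent A der_sum \<longleftrightarrow> locally_nilpotent A der_comm"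
proof -
  consider (neg1) "\<psi>2 e1 < 0" | (neg2) "\<psi>1 e2 < 0"
    | (zero1) "\<psi>1 e2 = 0" "\<psi>2 e1 \<ge> 0" | (zero2) "\<psi>2 e1 = 0" "\<psi>1 e2 \<ge> 0"
    | (pos) "\<psi>1 e2 \<ge> 1" "\<psi>2 e1 \<ge> 1" by linarith
  then show ?thesis
  proof cases
    case neg1
    then have "\<psi>1 = \<psi>2" by (rule forms_equal_if_negative)
    then have "locally_nilpotent A der_sum \<and> locally_nilpotent A der_comm"
      using both_locally_nilpotent[OF D1.\<psi>_add D1.\<psi>_degree _ D1.\<psi>_nonneg] D2.\<psi>_degree by simp
    then show ?thesis by blast
  next
    case neg2
    interpret swapped: derivation_pair k A G d2 \<psi>2 c2 e2 d1 \<psi>1 c1 e1 by (rule swap)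
    have "\<psi>2 = \<psi>1" using swapped.forms_equal_if_negative neg2 by blast
    then have "locally_nilpotent A der_sum \<and> locally_nilpotent A der_comm"
      using both_locally_nilpotent[OF D1.\<psi>_add D1.\<psi>_degree _ D1.\<psi>_nonneg] D2.\<psi>_degree by simp
    then show ?thesis by blast
  next
    case zero1
    have "locally_nilpotent A der_sum \<and> locally_nilpotent A der_comm"
      by (rule both_locally_nilpotent[of "\<lambda>v. (\<psi>2 e1 + 1) * \<psi>1 v + \<psi>2 v"])
        (use D1.\<psi>_add D2.\<psi>_add D1.\<psi>_degree D2.\<psi>_degree zero1 D1.\<psi>_nonneg D2.\<psi>_nonneg
          in \<open>auto simp: algebra_simps\<close>)
    then show ?thesis by blast
  next
    case zero2
    have "locally_nilpotent A der_sum \<and> locally_nilpotent A der_comm"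
      by (rule both_locally_nilpotent[of "\<lambda>v. \<psi>1 v + (\<psi>1 e2 + 1) * \<psi>2 v"])
        (use D1.\<psi>_add D2.\<psi>_add D1.\<psi>_degree D2.\<psi>_degree zero2 D1.\<psi>_nonneg D2.\<psi>_nonneg
          in \<open>auto simp: algebra_simps\<close>)
    then show ?thesis by blast
  next
    case pos
    then show ?thesis using sum_not_locally_nilpotent comm_not_locally_nilpotent by blast
  qed
qed

end

theorem corollary6p1:
  fixes k A :: "'a::field_char_0 set" and G :: "int^'n::finite \<Rightarrow> 'a set"
    and d1 d2 :: "'a \<Rightarrow> 'a"
  assumes "normal_affine_torus_algebra k A G"
    and "homogeneous_LND_fiber_type k A G d1" and "\<exists>a\<in>A. d1 a \<noteq> 0"
    and "homogeneous_LND_fiber_type k A G d2" and "\<exists>a\<in>A. d2 a \<noteq> 0"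
  shows "locally_nilpotent A (\<lambda>x. d1 x + d2 x) \<longleftrightarrow>
         locally_nilpotent A (\<lambda>x. d1 (d2 x) - d2 (d1 x))"
proof -
  interpret graded_algebra k A G by (rule graded_algebra.intro) (rule assms(1))
  obtain \<psi>1 c1 e1 where D1: "diagonal_derivation k A G d1 \<psi>1 c1 e1"
    using fiber_type_LND_diagonal[OF assms(2,3)] by blast
  obtain \<psi>2 c2 e2 where D2: "diagonal_derivation k A G d2 \<psi>2 c2 e2"
    using fiber_type_LND_diagonal[OF assms(4,5)] by blast
  interpret derivation_pair k A G d1 \<psi>1 c1 e1 d2 \<psi>2 c2 e2
    using D1 D2 by (simp add: derivation_pair_def diagonal_derivation_def)
  show ?thesis by (rule sum_lnd_iff_comm_lnd)
qed

end
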